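(* Let $R>0$, let $(E,d)$ be a metric space whose Borel $\sigma$-algebra makes it a standard Borel space, let $\nu$ be a Radon probability measure, and let $A\subset\mathrm{Supp}(\nu)$ be closed; assume that for every $\sigma>0$ the problem $\inf_\mu\{\mathrm{Ent}_\nu(\mu):\mu(E)=1,\ \int_E d_R(x,A)^2\,d\mu(x)\le\sigma^2\}$ is attained by a unique measure. For $a>0$ let $$d\mu_{a,R}(x)=\frac{\exp(-a\,d_R(x,A)^2)}{\int_E\exp(-a\,d_R(y,A)^2)\,d\nu(y)}\,d\nu(x).$$ Let $0<\varepsilon<R$. Then $\mu_{a,R}\big(E\setminus A^{\varepsilon}\big)\to0$ as $a\to\infty$, where $A^\varepsilon=\{x\in E: d^2(x,A)\le\varepsilon\}$.
   Context: $d(x,A)=\inf_{y\in A}d(x,y)$, $d_R=\min(d,R)$; $\mathrm{Ent}_\nu(\mu)=\int\frac{d\mu}{d\nu}\ln\frac{d\mu}{d\nu}\,d\nu$ if $\mu\ll\nu$, $+\infty$ otherwise; $\mathrm{Supp}(\nu)$ is the complement of the union of all $\nu$-null open sets. *)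

theory Defs
  imports "HOL-Analysis.Analysis" "HOL-Probability.Probability"
begin

text \<open>Distance to a set, d(x,A) = inf over y in A of d(x,y), valued in the extended reals
  (so that the infimum over the empty set is +infinity, as in the paper).\<close>
definition setdist_e :: "'a::metric_space set \<Rightarrow> 'a \<Rightarrow> ereal" where
  "setdist_e A x = (INF y\<in>A. ereal (dist x y))"

definition dR :: "real \<Rightarrow> 'a::metric_space set \<Rightarrow> 'a \<Rightarrow> real" where
  "dR R A x = real_of_ereal (min (setdist_e A x) (ereal R))"

definition enlarg :: "'a::metric_space set \<Rightarrow> real \<Rightarrow> 'a set" where
  "enlarg A eps = {x. (setdist_e A x)^2 \<le> ereal eps}"

definition Supp :: "'a::topological_space measure \<Rightarrow> 'a set" where
  "Supp \<nu> = UNIV - \<Union>{U. open U \<and> emeasure \<nu> U = 0}"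

definition radon_measure :: "'a::metric_space measure \<Rightarrow> bool" where
  "radon_measure \<nu> \<longleftrightarrow> sets \<nu> = sets borel \<and>
     (\<forall>x. \<exists>U. open U \<and> x \<in> U \<and> emeasure \<nu> U < \<infinity>) \<and>
     (\<forall>B\<in>sets \<nu>. emeasure \<nu> B = (SUP K\<in>{K. compact K \<and> K \<subseteq> B}. emeasure \<nu> K))"

definition standard_borel_space :: "'a measure \<Rightarrow> bool" where
  "standard_borel_space M \<longleftrightarrow> (\<exists>T. completely_metrizable_space T \<and> separable_space T \<and>
     topspace T = space M \<and> sets M = sigma_sets (space M) {U. openin T U})"

text \<open>Relative entropy Ent_nu(mu) = int (dmu/dnu) ln (dmu/dnu) dnu if mu << nu, +infinity
  otherwise.  The integrand is bounded below, so the integral is split into its positive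
  and negative parts.\<close>
definition Ent :: "'a measure \<Rightarrow> 'a measure \<Rightarrow> ereal" where
  "Ent \<nu> \<mu> = (if sets \<mu> = sets \<nu> \<and> absolutely_continuous \<nu> \<mu> then
      (let f = (\<lambda>x. enn2real (RN_deriv \<nu> \<mu> x)) in
        enn2ereal (\<integral>\<^sup>+ x. ennreal (f x * ln (f x)) \<partial>\<nu>)
        - enn2ereal (\<integral>\<^sup>+ x. ennreal (- (f x * ln (f x))) \<partial>\<nu>))
    else \<infinity>)"

definition admissible :: "real \<Rightarrow> 'a::metric_space set \<Rightarrow> real \<Rightarrow> 'a measure set" where
  "admissible R A \<sigma> = {\<mu>. sets \<mu> = sets borel \<and> emeasure \<mu> UNIV = 1 \<and>
      (\<integral>x. (dR R A x)^2 \<partial>\<mu>) \<le> \<sigma>^2}"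

definition mu_aR :: "'a::metric_space measure \<Rightarrow> 'a set \<Rightarrow> real \<Rightarrow> real \<Rightarrow> 'a measure" where
  "mu_aR \<nu> A R a = density \<nu> (\<lambda>x. ennreal (exp (- a * (dR R A x)^2)
       / (\<integral>y. exp (- a * (dR R A y)^2) \<partial>\<nu>)))"

end

theory Submission
  imports Defs "HOL-Real_Asymp.Real_Asymp"
begin

text \<open>The Gibbs measure with potential \<open>f\<close> at inverse temperature \<open>a\<close> gives any set on which
  \<open>f \<ge> c\<close> mass at most \<open>exp (-a c) / Z(a)\<close>, while the partition function \<open>Z(a)\<close> is at least
  \<open>exp (-a b) \<nu>{f < b}\<close>.  For \<open>b < c\<close> the quotient decays like \<open>exp (-a (c - b))\<close>.  With the
  potential \<open>d\<^sub>R(x,A)\<^sup>2\<close>, every point of \<open>A \<subseteq> Supp \<nu>\<close> has an open neighbourhood of positive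
  \<open>\<nu>\<close>-measure where the potential is small, and the potential is bounded below by
  \<open>min \<epsilon> (R\<^sup>2)\<close> outside \<open>A\<^sup>\<epsilon>\<close>.\<close>

definition gibbs_measure :: "'a measure \<Rightarrow> ('a \<Rightarrow> real) \<Rightarrow> real \<Rightarrow> 'a measure" where
  "gibbs_measure M f a =
     density M (\<lambda>x. ennreal (exp (- a * f x) / (\<integral>y. exp (- a * f y) \<partial>M)))"

lemma mu_aR_eq_gibbs_measure: "mu_aR \<nu> A R a = gibbs_measure \<nu> (\<lambda>x. (dR R A x)\<^sup>2) a"
  unfolding mu_aR_def gibbs_measure_def ..

context prob_space
begin

lemma integrable_exp_neg_potential:
  fixes f :: "'a \<Rightarrow> real"
  assumes "f \<in> borel_measurable M" "\<And>x. x \<in> space M \<Longrightarrow> 0 \<le> f x" "0 \<le> a"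
  shows "integrable M (\<lambda>x. exp (- a * f x))"
proof (rule integrable_const_bound[where B=1])
  show "AE x in M. norm (exp (- a * f x)) \<le> 1"
    using assms(2,3) by (intro AE_I2) simp
  show "(\<lambda>x. exp (- a * f x)) \<in> borel_measurable M"
    using assms(1) by measurable
qed

lemma gibbs_partition_function_ge:
  fixes f :: "'a \<Rightarrow> real"
  assumes f: "f \<in> borel_measurable M" "\<And>x. x \<in> space M \<Longrightarrow> 0 \<le> f x" and "0 \<le> a"
  shows "exp (- a * b) * measure M {x \<in> space M. f x < b} \<le> (\<integral>x. exp (- a * f x) \<partial>M)"
proof -
  let ?B = "{x \<in> space M. f x < b}"
  have B: "?B \<in> sets M" using f(1) by measurable
  have "exp (- a * b) * measure M ?B = (\<integral>x. indicator ?B x * exp (- a * b) \<partial>M)"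
    using B by (simp add: mult.commute)
  also have "\<dots> \<le> (\<integral>x. exp (- a * f x) \<partial>M)"
  proof (rule integral_mono)
    show "integrable M (\<lambda>x. indicator ?B x * exp (- a * b))"
      using B by (intro integrable_mult_left) (simp add: emeasure_eq_measure)
    show "integrable M (\<lambda>x. exp (- a * f x))"
      using f \<open>0 \<le> a\<close> by (rule integrable_exp_neg_potential)
    show "indicator ?B x * exp (- a * b) \<le> exp (- a * f x)" if "x \<in> space M" for x
      using that \<open>0 \<le> a\<close> by (auto simp: indicator_def mult_left_mono)
  qed
  finally show ?thesis .
qed

lemma measure_gibbs_measure_le:
  fixes f :: "'a \<Rightarrow> real"
  assumes "f \<in> borel_measurable M" "S \<in> sets M" "\<And>x. x \<in> S \<Longrightarrow> c \<le> f x" "0 \<le> a"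
    and Z_pos: "0 < (\<integral>x. exp (- a * f x) \<partial>M)"
  shows "measure (gibbs_measure M f a) S \<le> exp (- a * c) / (\<integral>x. exp (- a * f x) \<partial>M)"
proof -
  define Z where "Z = (\<integral>x. exp (- a * f x) \<partial>M)"
  have "emeasure (gibbs_measure M f a) S
      = (\<integral>\<^sup>+x. ennreal (exp (- a * f x) / Z) * indicator S x \<partial>M)"
    unfolding gibbs_measure_def Z_def using assms(1,2) by (subst emeasure_density) auto
  also have "\<dots> \<le> (\<integral>\<^sup>+x. ennreal (exp (- a * c) / Z) \<partial>M)"
  proof (rule nn_integral_mono)
    fix x
    have "exp (- a * f x) \<le> exp (- a * c)" if "x \<in> S"
      using assms(3)[OF that] \<open>0 \<le> a\<close> by (simp add: mult_left_mono)
    then show "ennreal (exp (- a * f x) / Z) * indicator S x \<le> ennreal (exp (- a * c) / Z)"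
      using Z_pos unfolding Z_def[symmetric]
      by (auto simp: indicator_def intro!: ennreal_leI divide_right_mono)
  qed
  also have "\<dots> = ennreal (exp (- a * c) / Z)"
    using emeasure_space_1 by simp
  finally show ?thesis
    using Z_pos unfolding measure_def Z_def[symmetric] by (intro enn2real_leI) auto
qed

theorem gibbs_measure_tendsto_0:
  fixes f :: "'a \<Rightarrow> real"
  assumes f: "f \<in> borel_measurable M" "\<And>x. x \<in> space M \<Longrightarrow> 0 \<le> f x"
    and S: "S \<in> sets M" "\<And>x. x \<in> S \<Longrightarrow> c \<le> f x"
    and "b < c" and B: "emeasure M {x \<in> space M. f x < b} \<noteq> 0"
  shows "((\<lambda>a. measure (gibbs_measure M f a) S) \<longlongrightarrow> 0) at_top"
proof -
  define m where "m = measure M {x \<in> space M. f x < b}"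
  have "m > 0"
    using B unfolding m_def by (simp add: emeasure_eq_measure zero_less_measure_iff)
  have bound: "measure (gibbs_measure M f a) S \<le> exp (- a * (c - b)) / m" if "0 \<le> a" for a
  proof -
    define Z where "Z = (\<integral>x. exp (- a * f x) \<partial>M)"
    have Z_ge: "exp (- a * b) * m \<le> Z"
      unfolding m_def Z_def using f that by (rule gibbs_partition_function_ge)
    moreover have "0 < exp (- a * b) * m" using \<open>m > 0\<close> by simp
    ultimately have "Z > 0" by linarith
    have "measure (gibbs_measure M f a) S \<le> exp (- a * c) / Z"
      using f(1) S that \<open>Z > 0\<close> unfolding Z_def
      by (rule measure_gibbs_measure_le)
    also have "\<dots> \<le> exp (- a * c) / (exp (- a * b) * m)"
      using Z_ge \<open>0 < exp (- a * b) * m\<close> \<open>Z > 0\<close>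
      by (intro divide_left_mono) (auto intro: mult_pos_pos)
    also have "\<dots> = exp (- a * (c - b)) / m"
      by (simp add: exp_minus exp_diff field_simps right_diff_distrib)
    finally show ?thesis .
  qed
  have lim: "((\<lambda>a. exp (- a * (c - b)) / m) \<longlongrightarrow> 0) at_top"
    using \<open>b < c\<close> \<open>m > 0\<close> by real_asymp
  show ?thesis
  proof (rule tendsto_sandwich[OF _ _ tendsto_const lim])
    show "\<forall>\<^sub>F a in at_top. measure (gibbs_measure M f a) S \<le> exp (- a * (c - b)) / m"
      using eventually_ge_at_top[of "0::real"] by eventually_elim (rule bound)
  qed simp
qed

end

lemma setdist_e_eq_infdist:
  assumes "A \<noteq> {}"
  shows "setdist_e A x = ereal (infdist x A)"
proof -
  have "bdd_below ((\<lambda>y. dist x y) ` A)" by (rule bdd_belowI[of _ 0]) auto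
  then have "ereal (Inf ((\<lambda>y. dist x y) ` A)) = Inf (ereal ` (\<lambda>y. dist x y) ` A)"
    using assms by (intro ereal_Inf') auto
  then show ?thesis using assms unfolding setdist_e_def infdist_def by (simp add: image_comp)
qed

lemma dR_empty: "dR R {} x = R"
  unfolding dR_def setdist_e_def by simp

lemma dR_eq_min_infdist:
  assumes "A \<noteq> {}"
  shows "dR R A x = min (infdist x A) R"
  unfolding dR_def setdist_e_eq_infdist[OF assms] by (simp flip: ereal_min)

lemma dR_eq_0: "x \<in> A \<Longrightarrow> 0 \<le> R \<Longrightarrow> dR R A x = 0"
  by (subst dR_eq_min_infdist) auto

lemma continuous_on_dR: "continuous_on UNIV (dR R A)"
proof (cases "A = {}")
  case True
  then show ?thesis by (simp add: dR_empty)
next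
  case False
  then have "dR R A = (\<lambda>x. min (infdist x A) R)" by (simp add: dR_eq_min_infdist fun_eq_iff)
  then show ?thesis by (simp add: continuous_intros)
qed

lemma enlarg_eq_infdist:
  assumes "A \<noteq> {}"
  shows "enlarg A \<epsilon> = {x. (infdist x A)\<^sup>2 \<le> \<epsilon>}"
  unfolding enlarg_def setdist_e_eq_infdist[OF assms] by simp

lemma closed_enlarg: "closed (enlarg A \<epsilon>)"
proof (cases "A = {}")
  case True
  then show ?thesis unfolding enlarg_def setdist_e_def by simp
next
  case False
  then show ?thesis
    unfolding enlarg_eq_infdist[OF False] by (intro closed_Collect_le continuous_intros)
qed

lemma dR_square_ge_outside_enlarg:
  assumes "0 \<le> R" "x \<notin> enlarg A \<epsilon>"
  shows "min \<epsilon> (R\<^sup>2) \<le> (dR R A x)\<^sup>2"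
proof (cases "A = {}")
  case True
  then show ?thesis by (simp add: dR_empty)
next
  case False
  then show ?thesis
    using assms unfolding dR_eq_min_infdist[OF False] enlarg_eq_infdist[OF False]
    by (cases "infdist x A \<le> R") (auto simp: min_def)
qed

lemma admissible_nonempty_imp_nonempty:
  assumes "admissible R A \<sigma> \<noteq> {}" "\<bar>\<sigma>\<bar> < R"
  shows "A \<noteq> {}"
proof
  assume "A = {}"
  from assms(1) obtain \<mu> where "sets \<mu> = sets borel" "emeasure \<mu> UNIV = 1"
    and le: "(\<integral>x. (dR R A x)\<^sup>2 \<partial>\<mu>) \<le> \<sigma>\<^sup>2"
    unfolding admissible_def by auto
  then have "measure \<mu> (space \<mu>) = 1"
    using sets_eq_imp_space_eq[of \<mu> borel] by (simp add: measure_def)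
  then have "(\<integral>x. (dR R A x)\<^sup>2 \<partial>\<mu>) = R\<^sup>2"
    using \<open>A = {}\<close> by (simp add: dR_empty)
  moreover have "\<sigma>\<^sup>2 < R\<^sup>2"
    using power_strict_mono[of "\<bar>\<sigma>\<bar>" R 2] assms(2) by simp
  ultimately show False using le by simp
qed

lemma emeasure_open_Supp_neq_0:
  assumes "x \<in> Supp \<nu>" "open U" "x \<in> U"
  shows "emeasure \<nu> U \<noteq> 0"
  using assms unfolding Supp_def by blast

theorem lemmaB1:
  fixes \<nu> :: "'a::metric_space measure" and A :: "'a set" and R \<epsilon> :: real
  assumes "R > 0"
    and "standard_borel_space (borel :: 'a measure)"
    and "prob_space \<nu>" and "radon_measure \<nu>"
    and "closed A" and "A \<subseteq> Supp \<nu>"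
    and "\<forall>\<sigma>>0. \<exists>!\<mu>. \<mu> \<in> admissible R A \<sigma> \<and>
                 Ent \<nu> \<mu> = (INF \<mu>'\<in>admissible R A \<sigma>. Ent \<nu> \<mu>')"
    and "0 < \<epsilon>" and "\<epsilon> < R"
  shows "((\<lambda>a. measure (mu_aR \<nu> A R a) (UNIV - enlarg A \<epsilon>)) \<longlongrightarrow> 0) at_top"
proof -
  interpret prob_space \<nu> by fact
  have sets_\<nu>: "sets \<nu> = sets borel"
    using \<open>radon_measure \<nu>\<close> unfolding radon_measure_def by simp
  \<comment> \<open>The minimisation hypothesis only serves to exclude \<open>A = {}\<close>, where \<open>d\<^sub>R \<equiv> R\<close>.\<close>
  have "admissible R A (R/2) \<noteq> {}"
    using assms(7) \<open>R > 0\<close> by (metis empty_iff half_gt_zero)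
  then have "A \<noteq> {}"
    by (rule admissible_nonempty_imp_nonempty) (use \<open>R > 0\<close> in simp)
  then obtain y where "y \<in> A" by blast
  let ?f = "\<lambda>x. (dR R A x)\<^sup>2"
  define c where "c = min \<epsilon> (R\<^sup>2)"
  have f_cont: "continuous_on UNIV ?f"
    by (intro continuous_intros continuous_on_dR)
  have "open {x. ?f x < c/2}"
    using f_cont continuous_on_const by (rule open_Collect_less)
  moreover have "c > 0" unfolding c_def using assms by simp
  ultimately have "emeasure \<nu> {x \<in> space \<nu>. ?f x < c/2} \<noteq> 0"
    using \<open>y \<in> A\<close> \<open>A \<subseteq> Supp \<nu>\<close> \<open>R > 0\<close> sets_eq_imp_space_eq[OF sets_\<nu>]
    by (intro emeasure_open_Supp_neq_0[of y]) (auto simp: dR_eq_0)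
  moreover have "?f \<in> borel_measurable \<nu>"
    using borel_measurable_continuous_onI[OF f_cont] measurable_cong_sets[OF sets_\<nu>] by blast
  moreover have "UNIV - enlarg A \<epsilon> \<in> sets \<nu>"
    unfolding sets_\<nu> using closed_enlarg by (intro borel_open open_Diff) auto
  moreover have "c \<le> ?f x" if "x \<in> UNIV - enlarg A \<epsilon>" for x
    unfolding c_def using that \<open>R > 0\<close> by (simp add: dR_square_ge_outside_enlarg)
  ultimately show ?thesis
    unfolding mu_aR_eq_gibbs_measure using \<open>c > 0\<close>
    by (intro gibbs_measure_tendsto_0[where b="c/2"]) auto
qed

end
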